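(* Let $n$ be a power of two and let $\mathcal{C}'$ be as in the context (for any fixed $s_0,s_1,s_2$). Then there exists a code $\mathcal{C}\subseteq\mathcal{C}'$ with $|\mathcal{C}|\ge |\mathcal{C}'|/m^{10}$ such that for any $x,x'\in\mathcal{C}$, either $H_x=H_{x'}$ or $|H_x\triangle H_{x'}|\ge 10$.
   Context: Logarithms are base $2$. Set $\Delta=50+1000\log n$ and $m=1000\Delta^2$. For $x\in\{0,1\}^n$ ending in $0011$, the marker segmentation is $x=z^x_1\|\cdots\|z^x_{\ell_x}$ where each $z^x_j$ ends with $0011$ and contains exactly one occurrence of $0011$. Let $h:\{0,1\}^{\le 3\Delta}\to\{0,\dots,m-1\}$ be a fixed function such that $h(z)\ne h(z')$ whenever $z'\ne z$ is obtained from $z$ by at most two adjacent transpositions, at most two substitutions, or at most one deletion and one insertion. Define $f(x)=\sum_{j=1}^{\ell_x} j(|z^x_j|\cdot m+h(z^x_j)) \bmod (10n\Delta m+1)$, $g_1(x)=\ell_x \bmod 5$, $g_2(x)=\sum_{i=1}^n\overline{x}_i \bmod 3$ with $\overline{x}_i=\sum_{j\le i}x_j \bmod 2$, and $\mathcal{C}'=\{x\in\{0,1\}^n:(x_{n-3},\dots,x_n)=(0,0,1,1), f(x)=s_0, g_1(x)=s_1, g_2(x)=s_2, |z^x_j|\le\Delta\ \forall j\}$. The hash multiset is $H_x=\{\{h(z^x_1),\dots,h(z^x_{\ell_x})\}\}$, and for multisets $|S\triangle T|=\sum_v|\mathrm{mult}_S(v)-\mathrm{mult}_T(v)|$. *)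

theory Defs
  imports Complex_Main "HOL-Library.Multiset"
begin

text \<open>Binary strings are bool lists; True encodes 1 and False encodes 0.\<close>

definition marker :: "bool list" where
  "marker = [False, False, True, True]"

definition marker_occ :: "bool list \<Rightarrow> nat" where
  "marker_occ z = card {i. i + 4 \<le> length z \<and> take 4 (drop i z) = marker}"

definition ends_with_marker :: "bool list \<Rightarrow> bool" where
  "ends_with_marker z \<longleftrightarrow> 4 \<le> length z \<and> drop (length z - 4) z = marker"

definition segs :: "bool list \<Rightarrow> bool list list" where
  "segs x = (THE zs. concat zs = x \<and>
      (\<forall>z\<in>set zs. ends_with_marker z \<and> marker_occ z = 1))"

text \<open>Delta = 50 + 1000 log_2 n, m = 1000 Delta^2 (n a power of two, so log_2 n is an integer).\<close>
definition Delta :: "nat \<Rightarrow> nat" where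
  "Delta n = 50 + 1000 * nat \<lfloor>log 2 (real n)\<rfloor>"

definition mm :: "nat \<Rightarrow> nat" where
  "mm n = 1000 * (Delta n)\<^sup>2"

definition adj_transp :: "bool list \<Rightarrow> bool list \<Rightarrow> bool" where
  "adj_transp z z' \<longleftrightarrow> (\<exists>i. Suc i < length z \<and>
      z' = z[i := z ! Suc i, Suc i := z ! i])"

definition subst1 :: "bool list \<Rightarrow> bool list \<Rightarrow> bool" where
  "subst1 z z' \<longleftrightarrow> (\<exists>i b. i < length z \<and> z' = z[i := b])"

definition del1 :: "bool list \<Rightarrow> bool list \<Rightarrow> bool" where
  "del1 z z' \<longleftrightarrow> (\<exists>i. i < length z \<and> z' = take i z @ drop (Suc i) z)"

definition ins1 :: "bool list \<Rightarrow> bool list \<Rightarrow> bool" where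
  "ins1 z z' \<longleftrightarrow> (\<exists>i b. i \<le> length z \<and> z' = take i z @ b # drop i z)"

definition upto2 :: "('a \<Rightarrow> 'a \<Rightarrow> bool) \<Rightarrow> 'a \<Rightarrow> 'a \<Rightarrow> bool" where
  "upto2 R z z' \<longleftrightarrow> z' = z \<or> R z z' \<or> (\<exists>y. R z y \<and> R y z')"

definition upto1 :: "('a \<Rightarrow> 'a \<Rightarrow> bool) \<Rightarrow> 'a \<Rightarrow> 'a \<Rightarrow> bool" where
  "upto1 R z z' \<longleftrightarrow> z' = z \<or> R z z'"

definition confusable :: "bool list \<Rightarrow> bool list \<Rightarrow> bool" where
  "confusable z z' \<longleftrightarrow> upto2 adj_transp z z' \<or> upto2 subst1 z z' \<or>
      (\<exists>y. upto1 del1 z y \<and> upto1 ins1 y z')"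

definition good_hash :: "nat \<Rightarrow> (bool list \<Rightarrow> nat) \<Rightarrow> bool" where
  "good_hash n h \<longleftrightarrow>
     (\<forall>z. length z \<le> 3 * Delta n \<longrightarrow> h z < mm n) \<and>
     (\<forall>z z'. length z \<le> 3 * Delta n \<longrightarrow> length z' \<le> 3 * Delta n \<longrightarrow>
        z' \<noteq> z \<longrightarrow> confusable z z' \<longrightarrow> h z \<noteq> h z')"

definition fval :: "nat \<Rightarrow> (bool list \<Rightarrow> nat) \<Rightarrow> bool list \<Rightarrow> nat" where
  "fval n h x = (\<Sum>j = 1..length (segs x).
       j * (length (segs x ! (j - 1)) * mm n + h (segs x ! (j - 1))))
     mod (10 * n * Delta n * mm n + 1)"

definition g1 :: "bool list \<Rightarrow> nat" where
  "g1 x = length (segs x) mod 5"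

definition g2 :: "bool list \<Rightarrow> nat" where
  "g2 x = (\<Sum>i = 1..length x. (\<Sum>j = 1..i. of_bool (x ! (j - 1))) mod 2) mod 3"

definition Cprime :: "nat \<Rightarrow> (bool list \<Rightarrow> nat) \<Rightarrow> nat \<Rightarrow> nat \<Rightarrow> nat \<Rightarrow> bool list set" where
  "Cprime n h s0 s1 s2 = {x. length x = n \<and> 4 \<le> n \<and> drop (n - 4) x = marker \<and>
      fval n h x = s0 \<and> g1 x = s1 \<and> g2 x = s2 \<and>
      (\<forall>z\<in>set (segs x). length z \<le> Delta n)}"

definition Hms :: "(bool list \<Rightarrow> nat) \<Rightarrow> bool list \<Rightarrow> nat multiset" where
  "Hms h x = mset (map h (segs x))"

definition msdist :: "'a multiset \<Rightarrow> 'a multiset \<Rightarrow> nat" where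
  "msdist S T = (\<Sum>v\<in>set_mset S \<union> set_mset T. nat \<bar>int (count S v) - int (count T v)\<bar>)"

end

theory Submission
  imports Defs
begin

text \<open>
  All hash values lie below m, so every H_x is a multiset over {..<m}. A multiset T with
  msdist S T \<le> 9 is determined by the two differences S - T and T - S, which together consist
  of at most 9 letters from {..<m} tagged "removed" or "added"; padding with a blank letter
  encodes T as a multiset of exactly 9 letters from an alphabet of size 2m + 1. Hence each
  H_x has at most (2m + 1)^9 \<le> m^10 hash multisets within distance 9 (counting itself).
  Now argue greedily: keep the whole class of codewords sharing the most frequent hash
  multiset, discard every codeword whose hash multiset is at distance 1..9 from it (at most
  m^10 classes, none larger than the kept one), and recurse.
\<close>

lemma card_le_filter_plus_fibres:
  assumes "finite A" "finite N" "\<And>c. c \<in> N \<Longrightarrow> card {x\<in>A. key x = c} \<le> k"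
  shows "card A \<le> card {x\<in>A. key x \<notin> N} + card N * k"
proof -
  have "A = {x\<in>A. key x \<notin> N} \<union> (\<Union>c\<in>N. {x\<in>A. key x = c})" by auto
  then have "card A \<le> card {x\<in>A. key x \<notin> N} + card (\<Union>c\<in>N. {x\<in>A. key x = c})"
    by (metis card_Un_le)
  also have "card (\<Union>c\<in>N. {x\<in>A. key x = c}) \<le> (\<Sum>c\<in>N. card {x\<in>A. key x = c})"
    using assms(2) by (rule card_UN_le)
  also have "\<dots> \<le> card N * k"
    using sum_bounded_above[of N "\<lambda>c. card {x\<in>A. key x = c}" k] assms(3) by simp
  finally show ?thesis by simp
qed

lemma ex_largest_fibre:
  assumes "finite A" "A \<noteq> {}"
  obtains b where "b \<in> key ` A" "\<And>c. card {x\<in>A. key x = c} \<le> card {x\<in>A. key x = b}"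
proof -
  obtain a where "a \<in> A" using assms(2) by blast
  moreover have "card {x\<in>A. key x = c} < Suc (card A)" for c
    using assms(1) by (simp add: card_mono le_imp_less_Suc)
  ultimately obtain b where "b \<in> key ` A"
    and "\<And>c. c \<in> key ` A \<Longrightarrow> card {x\<in>A. key x = c} \<le> card {x\<in>A. key x = b}"
    using ex_has_greatest_nat[of "\<lambda>c. c \<in> key ` A" "key a" "\<lambda>c. card {x\<in>A. key x = c}"]
    by blast
  moreover have "{x\<in>A. key x = c} = {}" if "c \<notin> key ` A" for c
    using that by blast
  ultimately show ?thesis using that by (metis card.empty zero_le)
qed

lemma greedy_separated_subset:
  fixes key :: "'a \<Rightarrow> 'b" and R :: "'b \<Rightarrow> 'b \<Rightarrow> bool"
  assumes "finite A" "key ` A \<subseteq> K" "finite K" "symp R" "irreflp R"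
    and "\<And>b. b \<in> K \<Longrightarrow> card {c \<in> K. R b c \<or> c = b} \<le> M"
  shows "\<exists>C\<subseteq>A. card A \<le> M * card C \<and> (\<forall>x\<in>C. \<forall>y\<in>C. \<not> R (key x) (key y))"
  using assms(1,2)
proof (induction "card A" arbitrary: A rule: less_induct)
  case less
  show ?case
  proof (cases "A = {}")
    case True
    then show ?thesis by auto
  next
    case False
    define F where "F b = {x\<in>A. key x = b}" for b
    obtain b where b: "b \<in> key ` A" and b_max: "\<And>c. card (F c) \<le> card (F b)"
      using ex_largest_fibre[OF less.prems(1) False] unfolding F_def by blast
    define N where "N = {c \<in> K. R b c \<or> c = b}"
    define A' where "A' = {x\<in>A. key x \<notin> N}"
    have "b \<in> N" using b less.prems(2) by (auto simp: N_def)
    with b have "A' \<subset> A" by (force simp: A'_def)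
    then have smaller: "card A' < card A" using less.prems(1) by (rule psubset_card_mono[rotated])
    have "finite A'" "key ` A' \<subseteq> K" using less.prems by (auto simp: A'_def)
    then obtain C' where C': "C' \<subseteq> A'" "card A' \<le> M * card C'"
      "\<forall>x\<in>C'. \<forall>y\<in>C'. \<not> R (key x) (key y)"
      using less.hyps[OF smaller] by blast
    have "card N \<le> M"
      using assms(6) b less.prems(2) by (auto simp: N_def)
    have "card A \<le> card A' + card N * card (F b)"
      unfolding A'_def using less.prems(1) assms(3) b_max
      by (intro card_le_filter_plus_fibres) (auto simp: N_def F_def)
    also have "\<dots> \<le> M * card C' + M * card (F b)"
      using C'(2) \<open>card N \<le> M\<close> by (intro add_mono mult_le_mono1)
    also have "\<dots> = M * card (C' \<union> F b)"
    proof -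
      have "finite C'" using C'(1) \<open>finite A'\<close> by (rule finite_subset)
      moreover have "finite (F b)" using less.prems(1) by (simp add: F_def)
      moreover have "C' \<inter> F b = {}" using C'(1) \<open>b \<in> N\<close> by (auto simp: A'_def F_def)
      ultimately show ?thesis by (simp add: card_Un_disjoint algebra_simps)
    qed
    finally have "card A \<le> M * card (C' \<union> F b)" .
    moreover have "C' \<union> F b \<subseteq> A" using C'(1) by (auto simp: A'_def F_def)
    moreover have "\<not> R (key x) (key y)" if "x \<in> C' \<union> F b" "y \<in> C' \<union> F b" for x y
    proof -
      have "\<not> R b (key z) \<and> \<not> R (key z) b" if "z \<in> C'" for z
        using that C'(1) less.prems(2) \<open>symp R\<close> by (auto simp: A'_def N_def dest: sympD)
      then show ?thesis
        using that C'(3) \<open>irreflp R\<close> by (auto simp: F_def dest: irreflpD)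
    qed
    ultimately show ?thesis by blast
  qed
qed

lemma msdist_eq_size_diff: "msdist S T = size (S - T) + size (T - S)"
proof -
  let ?U = "set_mset S \<union> set_mset T"
  have size_eq: "size M = (\<Sum>v\<in>?U. count M v)" if "set_mset M \<subseteq> ?U" for M
    using that by (simp add: size_multiset_overloaded_eq, intro sum.mono_neutral_left)
      (auto simp: count_eq_zero_iff)
  have "msdist S T = (\<Sum>v\<in>?U. count (S - T) v + count (T - S) v)"
    unfolding msdist_def by (intro sum.cong) auto
  also have "\<dots> = size (S - T) + size (T - S)"
    by (simp add: sum.distrib size_eq[of "S - T"] size_eq[of "T - S"] subset_iff in_diffD)
  finally show ?thesis .
qed

lemma msdist_commute: "msdist S T = msdist T S"
  by (simp add: msdist_eq_size_diff)

lemma msdist_self [simp]: "msdist S S = 0"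
  by (simp add: msdist_eq_size_diff)

lemma count_image_mset_inj:
  assumes "inj f"
  shows "count (image_mset f M) (f x) = count M x"
proof -
  have "f -` {f x} = {x}" using assms by (auto dest: injD)
  then show ?thesis by (cases "x \<in># M") (simp_all add: count_image_mset not_in_iff)
qed

lemma card_multisets_of_size_le_power:
  assumes "finite A"
  shows "card (multisets_of_size A d) \<le> card A ^ d"
proof -
  have "multisets_of_size A d \<subseteq> mset ` {xs. set xs \<subseteq> A \<and> length xs = d}"
    by (auto simp: multisets_of_size_def image_iff) (metis ex_mset set_mset_mset size_mset)
  then have "card (multisets_of_size A d) \<le> card (mset ` {xs. set xs \<subseteq> A \<and> length xs = d})"
    using assms by (intro card_mono finite_imageI finite_lists_length_eq)
  also have "\<dots> \<le> card {xs. set xs \<subseteq> A \<and> length xs = d}"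
    by (rule card_image_le) (rule finite_lists_length_eq[OF assms])
  finally show ?thesis by (simp add: card_lists_length_eq[OF assms])
qed

lemma
  fixes S :: "'a multiset"
  assumes "finite U" "set_mset S \<subseteq> U"
  shows finite_msdist_ball: "finite {T. set_mset T \<subseteq> U \<and> msdist S T \<le> d}"
    and card_msdist_ball_le: "card {T. set_mset T \<subseteq> U \<and> msdist S T \<le> d} \<le> (2 * card U + 1) ^ d"
proof -
  define B where "B = {T. set_mset T \<subseteq> U \<and> msdist S T \<le> d}"
  define Alph where "Alph = insert None (Some ` (U <+> U))"
  define enc where "enc T = image_mset (Some \<circ> Inl) (S - T) + image_mset (Some \<circ> Inr) (T - S)
      + replicate_mset (d - msdist S T) None" for T
  have other_tag: "count (image_mset (Some \<circ> Inr) M) (Some (Inl v)) = 0"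
    "count (image_mset (Some \<circ> Inl) M) (Some (Inr v)) = 0" for M :: "'a multiset" and v
    by (auto simp: count_eq_zero_iff)
  have count_enc: "count (enc T) (Some (Inl v)) = count (S - T) v"
    "count (enc T) (Some (Inr v)) = count (T - S) v" for T v
    using count_image_mset_inj[of "Some \<circ> Inl" "S - T" v] count_image_mset_inj[of "Some \<circ> Inr" "T - S" v]
    by (simp_all add: enc_def inj_def other_tag)
  have enc_inj: "inj_on enc B"
  proof (rule inj_onI)
    fix T T' assume "enc T = enc T'"
    then have diffs: "count (S - T) v = count (S - T') v" "count (T - S) v = count (T' - S) v" for v
      by (metis count_enc)+
    show "T = T'"
    proof (rule multiset_eqI)
      fix v
      show "count T v = count T' v" using diffs[of v] by simp
    qed
  qed
  have enc_range: "enc ` B \<subseteq> multisets_of_size Alph d"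
  proof (intro image_subsetI)
    fix T assume "T \<in> B"
    then have "size (enc T) = d" "set_mset (enc T) \<subseteq> Alph"
      using assms(2) by (auto simp: B_def enc_def Alph_def msdist_eq_size_diff dest: in_diffD)
    then show "enc T \<in> multisets_of_size Alph d" by (simp add: multisets_of_size_def)
  qed
  have "finite Alph" "card Alph = 2 * card U + 1"
    using assms(1) by (simp_all add: Alph_def card_image card_Plus)
  then show "finite B" using inj_on_finite[OF enc_inj enc_range] by blast
  have "card B \<le> card (multisets_of_size Alph d)"
    using card_inj_on_le[OF enc_inj enc_range] \<open>finite Alph\<close> by blast
  also have "\<dots> \<le> card Alph ^ d" by (rule card_multisets_of_size_le_power) fact
  finally show "card B \<le> (2 * card U + 1) ^ d" using \<open>card Alph = 2 * card U + 1\<close> by simp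
qed

lemma two_mult_plus_one_power_le:
  fixes m :: nat
  assumes "3 ^ d \<le> m"
  shows "(2 * m + 1) ^ d \<le> m ^ Suc d"
proof -
  have "1 \<le> m" using assms order_trans one_le_power by fastforce
  then have "(2 * m + 1) ^ d \<le> (3 * m) ^ d" by (intro power_mono) auto
  also have "\<dots> = 3 ^ d * m ^ d" by (rule power_mult_distrib)
  also have "\<dots> \<le> m * m ^ d" using assms by (rule mult_right_mono) simp
  finally show ?thesis by simp
qed

lemma mm_ge: "2500000 \<le> mm n"
proof -
  have "50 ^ 2 \<le> Delta n ^ 2" by (intro power_mono) (simp_all add: Delta_def)
  then show ?thesis by (simp add: mm_def)
qed

lemma finite_Cprime: "finite (Cprime n h s0 s1 s2)"
proof -
  have "Cprime n h s0 s1 s2 \<subseteq> {xs. set xs \<subseteq> UNIV \<and> length xs = n}"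
    by (auto simp: Cprime_def)
  then show ?thesis by (rule finite_subset) (rule finite_lists_length_eq, simp)
qed

lemma set_mset_Hms_Cprime:
  assumes "good_hash n h" "x \<in> Cprime n h s0 s1 s2"
  shows "set_mset (Hms h x) \<subseteq> {..<mm n}"
  using assms by (fastforce simp: Hms_def good_hash_def Cprime_def)

lemma card_Hms_close_le:
  assumes "good_hash n h" "S \<in> Hms h ` Cprime n h s0 s1 s2"
  shows "card {T \<in> Hms h ` Cprime n h s0 s1 s2. msdist S T \<le> 9} \<le> mm n ^ 10"
proof -
  let ?m = "mm n"
  have Hms_range: "set_mset (Hms h x) \<subseteq> {..<?m}" if "x \<in> Cprime n h s0 s1 s2" for x
    using set_mset_Hms_Cprime[OF assms(1) that] .
  then have S: "set_mset S \<subseteq> {..<?m}" using assms(2) by blast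
  have "card {T \<in> Hms h ` Cprime n h s0 s1 s2. msdist S T \<le> 9}
      \<le> card {T. set_mset T \<subseteq> {..<?m} \<and> msdist S T \<le> 9}"
    using Hms_range finite_msdist_ball[OF _ S] by (intro card_mono) auto
  also have "\<dots> \<le> (2 * ?m + 1) ^ 9" using card_msdist_ball_le[OF _ S] by simp
  also have "\<dots> \<le> ?m ^ Suc 9" using mm_ge[of n] by (intro two_mult_plus_one_power_le) simp
  finally show ?thesis by simp
qed

theorem lemma8:
  fixes n k s0 s1 s2 :: nat and h :: "bool list \<Rightarrow> nat"
  assumes "n = 2 ^ k"
    and "good_hash n h"
  shows "\<exists>C \<subseteq> Cprime n h s0 s1 s2.
           real (card C) \<ge> real (card (Cprime n h s0 s1 s2)) / real (mm n) ^ 10 \<and>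
           (\<forall>x\<in>C. \<forall>x'\<in>C. Hms h x = Hms h x' \<or> msdist (Hms h x) (Hms h x') \<ge> 10)"
proof -
  let ?A = "Cprime n h s0 s1 s2" and ?m = "mm n"
  define R where "R S T \<longleftrightarrow> S \<noteq> T \<and> msdist S T < 10" for S T :: "nat multiset"
  have R: "symp R" "irreflp R" by (auto simp: R_def symp_def irreflp_def msdist_commute)
  have nbhd: "card {T \<in> Hms h ` ?A. R S T \<or> T = S} \<le> ?m ^ 10" if "S \<in> Hms h ` ?A" for S
  proof -
    have "card {T \<in> Hms h ` ?A. R S T \<or> T = S} \<le> card {T \<in> Hms h ` ?A. msdist S T \<le> 9}"
      using finite_Cprime by (intro card_mono) (auto simp: R_def)
    also have "\<dots> \<le> ?m ^ 10" by (rule card_Hms_close_le[OF assms(2) that])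
    finally show ?thesis .
  qed
  obtain C where C: "C \<subseteq> ?A" "card ?A \<le> ?m ^ 10 * card C"
    "\<forall>x\<in>C. \<forall>y\<in>C. \<not> R (Hms h x) (Hms h y)"
    using greedy_separated_subset[OF finite_Cprime order_refl finite_imageI[OF finite_Cprime] R nbhd]
    by blast
  have "real (card ?A) \<le> real ?m ^ 10 * real (card C)"
    using C(2) by (metis of_nat_le_iff of_nat_mult of_nat_power)
  then have "real (card ?A) / real ?m ^ 10 \<le> real (card C)"
    using mm_ge[of n] by (simp add: divide_le_eq mult.commute)
  moreover have "\<forall>x\<in>C. \<forall>x'\<in>C. Hms h x = Hms h x' \<or> msdist (Hms h x) (Hms h x') \<ge> 10"
    using C(3) by (auto simp: R_def not_less)
  ultimately show ?thesis using C(1) by blast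
qed

end
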